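(* Let $X$ be finite, $\mathcal{X}_{lim}\subseteq\mathcal{X}^2$, and $p$ an observed random joint choice rule on $\mathcal{X}_{lim}$. The following are equivalent: (1) $p$ has a consumption dependent random utility representation on $\mathcal{X}_{lim}$; (2) there exists $q$ satisfying conditions (a)–(e) below; (3) there exists $q$ satisfying conditions (a), (b), (c), (d') and (e') below. Here $q$ is indexed by all $(x,y,A,B)$ with $A,B\in\mathcal{X}$, $(x,y)\in A\times B$, and: (a) $\sum_{A\subseteq A'\subseteq X}\sum_{B\subseteq B'\subseteq X}q(x,y,A',B')=p(x,y,A,B)$ for all $A\times B\in\mathcal{X}_{lim}$, $(x,y)\in A\times B$; (b) $\sum_{y\in B}q(x,y,A,B)=\sum_{z\in X\setminus B}q(x,z,A,B\cup\{z\})$ for all $A\in\mathcal{X}$, nonempty $B\subsetneq X$, $x\in A$; (c) $q(x,y,A,B)\ge0$ for all indices; (d) $\sum_{x\in A}\sum_{y\in X}q(x,y,A,X)=\sum_{z\in X\setminus A}\sum_{y\in X}q(z,y,A\cup\{z\},X)$ for all $A\in\mathcal{X}$, $A\neq X$; (e) $\sum_{x\in X}\sum_{y\in X}q(x,y,X,X)=1$; (d') the equation in (d) for those $A\in\mathcal{X}$, $A\ne X$, such that there is no $B\in\mathcal{X}$ with $A\times B\in\mathcal{X}_{lim}$; (e') the equation in (e), imposed only if there is no $B\in\mathcal{X}$ with $X\times B\in\mathcal{X}_{lim}$.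
   Context: $X$ is finite, $\mathcal{X}$ the nonempty subsets of $X$, $\mathcal{L}(X)$ the linear orders on $X$, $N(x,A)=\{\succ: x\succ y\ \forall y\in A\setminus\{x\}\}$. An observed random joint choice rule on $\mathcal{X}_{lim}$ assigns to each $A\times B\in\mathcal{X}_{lim}$ and $(x,y)\in A\times B$ a number $p(x,y,A,B)\ge0$ with $\sum_{x\in A}\sum_{y\in B}p(x,y,A,B)=1$. It has a consumption dependent random utility representation if there exist $\nu\in\Delta(\mathcal{L}(X))$ and a transition function $t:X\times\mathcal{L}(X)\to\Delta(\mathcal{L}(X))$ (with $t_{\succ'}(x,\succ)$ the probability of $\succ'$) such that $p(x,y,A,B)=\sum_{\succ\in N(x,A)}\sum_{\succ'\in N(y,B)}\nu(\succ)t_{\succ'}(x,\succ)$ for all $A\times B\in\mathcal{X}_{lim}$, $(x,y)\in A\times B$. *)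

theory Defs
  imports Complex_Main
begin

text \<open>The ground set X is the universe of a finite type 'a.
  Linear orders on X are strict linear orders (relations) on UNIV; (x,y) in r means x is preferred to y.\<close>

definition linorders :: "('a \<times> 'a) set set" where
  "linorders = {r. strict_linear_order r}"

definition Nset :: "'a \<Rightarrow> 'a set \<Rightarrow> ('a \<times> 'a) set set" where
  "Nset x A = {r \<in> linorders. \<forall>y \<in> A - {x}. (x, y) \<in> r}"

definition nesets :: "'a set set" where
  "nesets = {A. A \<noteq> {}}"

definition rjcr :: "('a set \<times> 'a set) set \<Rightarrow> ('a \<Rightarrow> 'a \<Rightarrow> 'a set \<Rightarrow> 'a set \<Rightarrow> real) \<Rightarrow> bool" where
  "rjcr Xlim p \<longleftrightarrow>
     (\<forall>(A, B) \<in> Xlim. (\<forall>x \<in> A. \<forall>y \<in> B. p x y A B \<ge> 0) \<and>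
                      (\<Sum>x\<in>A. \<Sum>y\<in>B. p x y A B) = 1)"

definition is_dist :: "(('a \<times> 'a) set \<Rightarrow> real) \<Rightarrow> bool" where
  "is_dist \<mu> \<longleftrightarrow> (\<forall>r. \<mu> r \<ge> 0) \<and> (\<forall>r. r \<notin> linorders \<longrightarrow> \<mu> r = 0)
                  \<and> (\<Sum>r\<in>linorders. \<mu> r) = 1"

text \<open>Consumption dependent random utility representation. t x r r' is the
  probability of r' given consumption x and preference r.\<close>
definition cdru_rep :: "('a::finite set \<times> 'a set) set \<Rightarrow> ('a \<Rightarrow> 'a \<Rightarrow> 'a set \<Rightarrow> 'a set \<Rightarrow> real) \<Rightarrow> bool" where
  "cdru_rep Xlim p \<longleftrightarrow>
     (\<exists>(\<nu> :: ('a \<times> 'a) set \<Rightarrow> real) (t :: 'a \<Rightarrow> ('a \<times> 'a) set \<Rightarrow> ('a \<times> 'a) set \<Rightarrow> real).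
        is_dist \<nu> \<and> (\<forall>x. \<forall>r \<in> linorders. is_dist (t x r)) \<and>
        (\<forall>(A, B) \<in> Xlim. \<forall>x \<in> A. \<forall>y \<in> B.
           p x y A B = (\<Sum>r\<in>Nset x A. \<Sum>r'\<in>Nset y B. \<nu> r * t x r r')))"

definition cond_a :: "('a::finite set \<times> 'a set) set \<Rightarrow> ('a \<Rightarrow> 'a \<Rightarrow> 'a set \<Rightarrow> 'a set \<Rightarrow> real)
    \<Rightarrow> ('a \<Rightarrow> 'a \<Rightarrow> 'a set \<Rightarrow> 'a set \<Rightarrow> real) \<Rightarrow> bool" where
  "cond_a Xlim p q \<longleftrightarrow>
     (\<forall>(A, B) \<in> Xlim. \<forall>x \<in> A. \<forall>y \<in> B.
        (\<Sum>A'\<in>{A'. A \<subseteq> A'}. \<Sum>B'\<in>{B'. B \<subseteq> B'}. q x y A' B') = p x y A B)"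

definition cond_b :: "('a::finite \<Rightarrow> 'a \<Rightarrow> 'a set \<Rightarrow> 'a set \<Rightarrow> real) \<Rightarrow> bool" where
  "cond_b q \<longleftrightarrow>
     (\<forall>A \<in> nesets. \<forall>B. B \<noteq> {} \<and> B \<noteq> UNIV \<longrightarrow> (\<forall>x \<in> A.
        (\<Sum>y\<in>B. q x y A B) = (\<Sum>z\<in>UNIV - B. q x z A (insert z B))))"

definition cond_c :: "('a \<Rightarrow> 'a \<Rightarrow> 'a set \<Rightarrow> 'a set \<Rightarrow> real) \<Rightarrow> bool" where
  "cond_c q \<longleftrightarrow> (\<forall>A \<in> nesets. \<forall>B \<in> nesets. \<forall>x \<in> A. \<forall>y \<in> B. q x y A B \<ge> 0)"

definition eq_d :: "('a::finite \<Rightarrow> 'a \<Rightarrow> 'a set \<Rightarrow> 'a set \<Rightarrow> real) \<Rightarrow> 'a set \<Rightarrow> bool" where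
  "eq_d q A \<longleftrightarrow>
     (\<Sum>x\<in>A. \<Sum>y\<in>UNIV. q x y A UNIV) = (\<Sum>z\<in>UNIV - A. \<Sum>y\<in>UNIV. q z y (insert z A) UNIV)"

definition eq_e :: "('a::finite \<Rightarrow> 'a \<Rightarrow> 'a set \<Rightarrow> 'a set \<Rightarrow> real) \<Rightarrow> bool" where
  "eq_e q \<longleftrightarrow> (\<Sum>x\<in>UNIV. \<Sum>y\<in>UNIV. q x y UNIV UNIV) = 1"

definition cond_d :: "('a::finite \<Rightarrow> 'a \<Rightarrow> 'a set \<Rightarrow> 'a set \<Rightarrow> real) \<Rightarrow> bool" where
  "cond_d q \<longleftrightarrow> (\<forall>A \<in> nesets. A \<noteq> UNIV \<longrightarrow> eq_d q A)"

definition cond_d' :: "('a::finite set \<times> 'a set) set \<Rightarrow> ('a \<Rightarrow> 'a \<Rightarrow> 'a set \<Rightarrow> 'a set \<Rightarrow> real) \<Rightarrow> bool" where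
  "cond_d' Xlim q \<longleftrightarrow>
     (\<forall>A \<in> nesets. A \<noteq> UNIV \<and> \<not> (\<exists>B \<in> nesets. (A, B) \<in> Xlim) \<longrightarrow> eq_d q A)"

definition cond_e' :: "('a::finite set \<times> 'a set) set \<Rightarrow> ('a \<Rightarrow> 'a \<Rightarrow> 'a set \<Rightarrow> 'a set \<Rightarrow> real) \<Rightarrow> bool" where
  "cond_e' Xlim q \<longleftrightarrow> (\<not> (\<exists>B \<in> nesets. (UNIV, B) \<in> Xlim) \<longrightarrow> eq_e q)"

end

(*
  Read a set C of alternatives as a node of the subset lattice, with an edge from C to C - {y}
  for every y in C, and read w y C as the flow along that edge. A linear order r defines the
  unit flow along the chain that deletes the alternatives from best to worst: it
  leaves C by deleting y exactly when C consists of y and everything ranked below y.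
  Conversely, a nonnegative flow conserved at every proper nonempty node is a mixture of such
  chains: deleting y from C with probability w y C / outflow w C defines a random ranking
  whose edge marginals reproduce the flow.

  Given a representation (\<nu>, t), the witness q x y A B is the probability that the first
  preference has cut A at x and the second one has cut B at y. Condition (a) is then Moebius
  inversion, since r is in N(x, A) iff A lies inside the cut of r at x; (b) and (d) say that the
  second- and first-stage marginals of q are conserving flows, and (e) that the first-stage
  flow has mass one. Conversely, the flow of (d) yields \<nu>, and for every first-stage cut A at x
  the flow of (b) yields t. Finally, summing (a) over an observed menu A \<times> B shows that the
  net outflow D of the first-stage flow satisfies (\<Sum>C \<supseteq> A. D C) = 1; together with (d')
  and (e') this forces D to be the indicator of X, which is (d) and (e).
*)

theory Submission
  imports Defs "HOL-Combinatorics.Multiset_Permutations"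
begin

section \<open>Linear orders on a finite type\<close>

lemma linorders_trans: "r \<in> linorders \<Longrightarrow> (a, b) \<in> r \<Longrightarrow> (b, c) \<in> r \<Longrightarrow> (a, c) \<in> r"
  unfolding linorders_def strict_linear_order_on_def trans_def by blast

lemma linorders_irrefl: "r \<in> linorders \<Longrightarrow> (a, a) \<notin> r"
  unfolding linorders_def strict_linear_order_on_def irrefl_def by blast

lemma linorders_total: "r \<in> linorders \<Longrightarrow> a \<noteq> b \<Longrightarrow> (a, b) \<in> r \<or> (b, a) \<in> r"
  unfolding linorders_def strict_linear_order_on_def total_on_def by blast

lemma linorders_asym: "r \<in> linorders \<Longrightarrow> (a, b) \<in> r \<Longrightarrow> (b, a) \<notin> r"
  by (meson linorders_trans linorders_irrefl)

lemma linorders_acyclic: "r \<in> linorders \<Longrightarrow> acyclic r"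
  unfolding linorders_def strict_linear_order_on_def by (simp add: acyclic_irrefl)

lemma linorders_has_top:
  fixes r :: "('a::finite \<times> 'a) set"
  assumes r: "r \<in> linorders" and "B \<noteq> {}"
  obtains y where "y \<in> B" "\<And>b. b \<in> B \<Longrightarrow> b \<noteq> y \<Longrightarrow> (y, b) \<in> r"
proof -
  have "wf r" by (rule finite_acyclic_wf) (simp_all add: linorders_acyclic[OF r])
  then obtain y where "y \<in> B" "\<And>b. (b, y) \<in> r \<Longrightarrow> b \<notin> B"
    using \<open>B \<noteq> {}\<close> by (metis wfE_min ex_in_conv)
  then show ?thesis using that linorders_total[OF r] by metis
qed

lemma linorders_has_bottom:
  fixes r :: "('a::finite \<times> 'a) set"
  assumes r: "r \<in> linorders" and "B \<noteq> {}"
  obtains z where "z \<in> B" "\<And>b. b \<in> B \<Longrightarrow> b \<noteq> z \<Longrightarrow> (b, z) \<in> r"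
proof -
  have "wf (r\<inverse>)" by (rule finite_acyclic_wf_converse) (simp_all add: linorders_acyclic[OF r])
  then obtain z where "z \<in> B" "\<And>b. (z, b) \<in> r \<Longrightarrow> b \<notin> B"
    using \<open>B \<noteq> {}\<close> by (metis wfE_min ex_in_conv converse_iff)
  then show ?thesis using that linorders_total[OF r] by metis
qed

definition lower_cut :: "('a \<times> 'a) set \<Rightarrow> 'a \<Rightarrow> 'a set" where
  "lower_cut r x = {w. (w, x) \<notin> r}"

definition lower_set :: "('a \<times> 'a) set \<Rightarrow> 'a set \<Rightarrow> bool" where
  "lower_set r C \<longleftrightarrow> (\<forall>a b. a \<notin> C \<longrightarrow> b \<in> C \<longrightarrow> (a, b) \<in> r)"

lemma lower_cut_eq_iff:
  assumes r: "r \<in> linorders" and y: "y \<in> C"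
  shows "lower_cut r y = C \<longleftrightarrow> (\<forall>a. a \<notin> C \<longrightarrow> (a, y) \<in> r) \<and> (\<forall>b\<in>C - {y}. (y, b) \<in> r)"
  unfolding lower_cut_def using y linorders_irrefl[OF r] linorders_asym[OF r] linorders_total[OF r]
  by blast

lemma inj_lower_cut:
  assumes r: "r \<in> linorders" shows "inj (lower_cut r)"
proof (rule injI)
  fix y y' assume eq: "lower_cut r y = lower_cut r y'"
  show "y = y'"
  proof (rule ccontr)
    assume "y \<noteq> y'"
    then have "y \<notin> lower_cut r y' \<or> y' \<notin> lower_cut r y"
      using linorders_total[OF r] unfolding lower_cut_def by blast
    moreover have "y \<in> lower_cut r y" "y' \<in> lower_cut r y'"
      using linorders_irrefl[OF r] unfolding lower_cut_def by blast+
    ultimately show False using eq by blast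
  qed
qed

section \<open>Flows on the subset lattice\<close>

definition outflow :: "('a \<Rightarrow> 'a set \<Rightarrow> real) \<Rightarrow> 'a set \<Rightarrow> real" where
  "outflow w C = (\<Sum>y\<in>C. w y C)"

definition inflow :: "('a::finite \<Rightarrow> 'a set \<Rightarrow> real) \<Rightarrow> 'a set \<Rightarrow> real" where
  "inflow w C = (\<Sum>z\<in>UNIV - C. w z (insert z C))"

definition conserving :: "('a::finite \<Rightarrow> 'a set \<Rightarrow> real) \<Rightarrow> bool" where
  "conserving w \<longleftrightarrow> (\<forall>C. C \<noteq> {} \<longrightarrow> C \<noteq> UNIV \<longrightarrow> outflow w C = inflow w C)"

lemma conservingD: "conserving w \<Longrightarrow> C \<noteq> {} \<Longrightarrow> C \<noteq> UNIV \<Longrightarrow> outflow w C = inflow w C"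
  unfolding conserving_def by blast

lemma outflow_sum: "outflow (\<lambda>y C. \<Sum>i\<in>I. w i y C) D = (\<Sum>i\<in>I. outflow (w i) D)"
  unfolding outflow_def by (rule sum.swap)

lemma outflow_scale: "outflow (\<lambda>y C. c * w y C) D = c * outflow w D"
  unfolding outflow_def by (rule sum_distrib_left[symmetric])

lemma conserving_sum:
  "(\<And>i. i \<in> I \<Longrightarrow> conserving (w i)) \<Longrightarrow> conserving (\<lambda>y C. \<Sum>i\<in>I. w i y C)"
  unfolding conserving_def outflow_def inflow_def
  by (subst (1 2) sum.swap) (simp cong: sum.cong)

lemma conserving_scale: "conserving w \<Longrightarrow> conserving (\<lambda>y C. c * w y C)"
  unfolding conserving_def outflow_def inflow_def by (simp flip: sum_distrib_left)

lemma sum_of_bool_unique: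
  assumes "finite A" and "\<And>x y. x \<in> A \<Longrightarrow> y \<in> A \<Longrightarrow> P x \<Longrightarrow> P y \<Longrightarrow> x = y"
  shows "(\<Sum>x\<in>A. of_bool (P x) :: real) = of_bool (\<exists>x\<in>A. P x)"
proof (cases "\<exists>x\<in>A. P x")
  case True
  then obtain x where "x \<in> A" "P x" by blast
  then have "A \<inter> {x. P x} = {x}" using assms(2) by blast
  then show ?thesis using assms(1) True by simp
qed (use assms(1) in simp)

definition cut_flow :: "('a \<times> 'a) set \<Rightarrow> 'a \<Rightarrow> 'a set \<Rightarrow> real" where
  "cut_flow r y C = of_bool (lower_cut r y = C)"

lemma outflow_cut_flow:
  fixes r :: "('a::finite \<times> 'a) set"
  assumes r: "r \<in> linorders" and "C \<noteq> {}"
  shows "outflow (cut_flow r) C = of_bool (lower_set r C)"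
proof -
  have "outflow (cut_flow r) C = of_bool (\<exists>y\<in>C. lower_cut r y = C)"
    unfolding outflow_def cut_flow_def
    by (rule sum_of_bool_unique) (simp_all add: injD[OF inj_lower_cut[OF r]])
  also have "(\<exists>y\<in>C. lower_cut r y = C) \<longleftrightarrow> lower_set r C"
  proof
    assume "\<exists>y\<in>C. lower_cut r y = C"
    then obtain y where "y \<in> C" "\<forall>a. a \<notin> C \<longrightarrow> (a, y) \<in> r" "\<forall>b\<in>C - {y}. (y, b) \<in> r"
      using lower_cut_eq_iff[OF r] by blast
    then show "lower_set r C"
      unfolding lower_set_def by (metis DiffI singletonD linorders_trans[OF r])
  next
    assume "lower_set r C"
    moreover obtain y where "y \<in> C" "\<And>b. b \<in> C \<Longrightarrow> b \<noteq> y \<Longrightarrow> (y, b) \<in> r"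
      using linorders_has_top[OF r \<open>C \<noteq> {}\<close>] by blast
    ultimately show "\<exists>y\<in>C. lower_cut r y = C"
      unfolding lower_set_def by (auto simp: lower_cut_eq_iff[OF r])
  qed
  finally show ?thesis .
qed

lemma inflow_cut_flow:
  fixes r :: "('a::finite \<times> 'a) set"
  assumes r: "r \<in> linorders" and "C \<noteq> UNIV"
  shows "inflow (cut_flow r) C = of_bool (lower_set r C)"
proof -
  have cut_insert: "lower_cut r z = insert z C \<longleftrightarrow>
      (\<forall>a. a \<notin> insert z C \<longrightarrow> (a, z) \<in> r) \<and> (\<forall>b\<in>C. (z, b) \<in> r)" if "z \<notin> C" for z
    using lower_cut_eq_iff[OF r, of z "insert z C"] that by (simp add: insert_Diff_if)
  have "inflow (cut_flow r) C = of_bool (\<exists>z\<in>UNIV - C. lower_cut r z = insert z C)"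
    unfolding inflow_def cut_flow_def
  proof (rule sum_of_bool_unique)
    fix z z' assume z: "z \<in> UNIV - C" "lower_cut r z = insert z C"
      and z': "z' \<in> UNIV - C" "lower_cut r z' = insert z' C"
    show "z = z'"
    proof (rule ccontr)
      assume "z \<noteq> z'"
      then have "(z', z) \<in> r" "(z, z') \<in> r"
        using z z' cut_insert by auto
      then show False using linorders_asym[OF r] by blast
    qed
  qed simp
  also have "(\<exists>z\<in>UNIV - C. lower_cut r z = insert z C) \<longleftrightarrow> lower_set r C"
  proof
    assume "\<exists>z\<in>UNIV - C. lower_cut r z = insert z C"
    then obtain z where "z \<notin> C" "\<forall>a. a \<notin> insert z C \<longrightarrow> (a, z) \<in> r" "\<forall>b\<in>C. (z, b) \<in> r"
      using cut_insert by blast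
    then show "lower_set r C"
      unfolding lower_set_def by (metis insertE linorders_trans[OF r])
  next
    assume "lower_set r C"
    moreover obtain z where "z \<in> UNIV - C" "\<And>b. b \<in> UNIV - C \<Longrightarrow> b \<noteq> z \<Longrightarrow> (b, z) \<in> r"
      using linorders_has_bottom[OF r, of "UNIV - C"] \<open>C \<noteq> UNIV\<close> by blast
    ultimately show "\<exists>z\<in>UNIV - C. lower_cut r z = insert z C"
      unfolding lower_set_def by (auto simp: cut_insert)
  qed
  finally show ?thesis .
qed

lemma conserving_cut_flow: "r \<in> linorders \<Longrightarrow> conserving (cut_flow r)"
  unfolding conserving_def by (simp add: outflow_cut_flow inflow_cut_flow)

lemma outflow_cut_flow_UNIV:
  fixes r :: "('a::finite \<times> 'a) set"
  shows "r \<in> linorders \<Longrightarrow> outflow (cut_flow r) UNIV = 1"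
  by (simp add: outflow_cut_flow[OF _ UNIV_not_empty] lower_set_def)

lemma sum_supersets_cut_flow:
  fixes r :: "('a::finite \<times> 'a) set"
  assumes r: "r \<in> linorders" and x: "x \<in> A"
  shows "(\<Sum>A'\<in>{A'. A \<subseteq> A'}. cut_flow r x A') = of_bool (r \<in> Nset x A)"
proof -
  have "(\<Sum>A'\<in>{A'. A \<subseteq> A'}. cut_flow r x A') = of_bool (A \<subseteq> lower_cut r x)"
    unfolding cut_flow_def of_bool_def by (simp add: sum.delta)
  also have "A \<subseteq> lower_cut r x \<longleftrightarrow> r \<in> Nset x A"
    unfolding lower_cut_def Nset_def
    using r x linorders_total[OF r] linorders_asym[OF r] linorders_irrefl[OF r]
    by blast
  finally show ?thesis .
qed

lemma sum_supersets_inflow: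
  fixes W :: "'a::finite \<Rightarrow> 'a set \<Rightarrow> real"
  shows "(\<Sum>B'\<in>{B'. B \<subseteq> B'}. \<Sum>y\<in>B' - B. W y B') = (\<Sum>C\<in>{C. B \<subseteq> C}. inflow W C)"
proof -
  have "(\<Sum>B'\<in>{B'. B \<subseteq> B'}. \<Sum>y\<in>B' - B. W y B') = (\<Sum>(B', y)\<in>(SIGMA B':{B'. B \<subseteq> B'}. B' - B). W y B')"
    by (rule sum.Sigma) auto
  also have "\<dots> = (\<Sum>(C, z)\<in>(SIGMA C:{C. B \<subseteq> C}. UNIV - C). W z (insert z C))"
    by (rule sum.reindex_bij_witness[where j = "\<lambda>(B', y). (B' - {y}, y)"
          and i = "\<lambda>(C, z). (insert z C, z)"])
       (auto simp: insert_absorb)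
  also have "\<dots> = (\<Sum>C\<in>{C. B \<subseteq> C}. inflow W C)"
    unfolding inflow_def by (rule sum.Sigma[symmetric]) auto
  finally show ?thesis .
qed

lemma sum_supersets_eq_net_outflow:
  fixes W :: "'a::finite \<Rightarrow> 'a set \<Rightarrow> real"
  shows "(\<Sum>y\<in>B. \<Sum>B'\<in>{B'. B \<subseteq> B'}. W y B') = (\<Sum>C\<in>{C. B \<subseteq> C}. outflow W C - inflow W C)"
proof -
  have "(\<Sum>y\<in>B. \<Sum>B'\<in>{B'. B \<subseteq> B'}. W y B') = (\<Sum>B'\<in>{B'. B \<subseteq> B'}. \<Sum>y\<in>B. W y B')"
    by (rule sum.swap)
  also have "\<dots> = (\<Sum>B'\<in>{B'. B \<subseteq> B'}. outflow W B' - (\<Sum>y\<in>B' - B. W y B'))"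
  proof (rule sum.cong[OF refl])
    fix B' assume "B' \<in> {B'. B \<subseteq> B'}"
    then show "(\<Sum>y\<in>B. W y B') = outflow W B' - (\<Sum>y\<in>B' - B. W y B')"
      unfolding outflow_def using sum.subset_diff[of B B' "\<lambda>y. W y B'"] by simp
  qed
  finally show ?thesis
    by (simp add: sum_subtractf sum_supersets_inflow)
qed

lemma sum_supersets_conserving:
  fixes W :: "'a::finite \<Rightarrow> 'a set \<Rightarrow> real"
  assumes "conserving W" and "B \<noteq> {}"
  shows "(\<Sum>y\<in>B. \<Sum>B'\<in>{B'. B \<subseteq> B'}. W y B') = outflow W UNIV"
proof -
  have "(\<Sum>y\<in>B. \<Sum>B'\<in>{B'. B \<subseteq> B'}. W y B')
      = (\<Sum>C\<in>{C. B \<subseteq> C}. if C = UNIV then outflow W UNIV else 0)"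
    unfolding sum_supersets_eq_net_outflow
  proof (intro sum.cong refl)
    fix C assume "C \<in> {C. B \<subseteq> C}"
    then have "C \<noteq> {}" using assms(2) by auto
    then show "outflow W C - inflow W C = (if C = UNIV then outflow W UNIV else 0)"
      using conservingD[OF assms(1)] by (simp add: inflow_def)
  qed
  then show ?thesis by simp
qed

lemma top_indicator_if_superset_sums:
  fixes D :: "'a::finite set \<Rightarrow> real" and \<A> :: "'a set set"
  assumes sums: "\<And>A. A \<in> \<A> \<Longrightarrow> (\<Sum>C\<in>{C. A \<subseteq> C}. D C) = 1"
    and outside: "\<And>A. A \<noteq> {} \<Longrightarrow> A \<noteq> UNIV \<Longrightarrow> A \<notin> \<A> \<Longrightarrow> D A = 0"
    and top: "UNIV \<notin> \<A> \<Longrightarrow> D UNIV = 1"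
  shows "A \<noteq> {} \<Longrightarrow> D A = of_bool (A = UNIV)"
proof (induction "card (UNIV - A)" arbitrary: A rule: less_induct)
  case less
  have D_top: "D UNIV = 1"
  proof -
    have "{C. UNIV \<subseteq> C} = {UNIV :: 'a set}" by auto
    then show ?thesis using sums[of UNIV] top by (cases "UNIV \<in> \<A>") simp_all
  qed
  consider "A = UNIV" | "A \<noteq> UNIV" "A \<notin> \<A>" | "A \<noteq> UNIV" "A \<in> \<A>" by blast
  then show ?case
  proof cases
    case 3
    have "1 = (\<Sum>C\<in>{C. A \<subseteq> C}. D C)" using sums[OF 3(2)] by simp
    also have "\<dots> = (\<Sum>C\<in>{C. A \<subseteq> C}. (if C = A then D A else 0) + (if C = UNIV then 1 else 0))"
    proof (rule sum.cong[OF refl])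
      fix C assume C: "C \<in> {C. A \<subseteq> C}"
      show "D C = (if C = A then D A else 0) + (if C = UNIV then 1 else 0)"
      proof (cases "C = A \<or> C = UNIV")
        case False
        then have "A \<subset> C" "C \<noteq> UNIV" using C by auto
        then have "card (UNIV - C) < card (UNIV - A)" "C \<noteq> {}" by (auto intro!: psubset_card_mono)
        then have "D C = 0" using less.hyps \<open>C \<noteq> UNIV\<close> by simp
        then show ?thesis using False by simp
      qed (use 3(1) D_top in auto)
    qed
    also have "\<dots> = D A + 1"
      using 3(1) by (simp add: sum.distrib)
    finally show ?thesis using 3(1) by simp
  qed (use D_top outside less.prems in auto)
qed

section \<open>Random rankings from flows\<close>

lemma sum_permutations_of_set_Cons:
  assumes "finite D" "D \<noteq> {}"
  shows "(\<Sum>xs\<in>permutations_of_set D. f xs) = (\<Sum>y\<in>D. \<Sum>ys\<in>permutations_of_set (D - {y}). f (y # ys))"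
proof -
  have "(\<Sum>xs\<in>permutations_of_set D. f xs) = (\<Sum>y\<in>D. \<Sum>xs\<in>(#) y ` permutations_of_set (D - {y}). f xs)"
    unfolding permutations_of_set_nonempty[OF assms(2)]
    by (rule sum.UNION_disjoint) (use assms(1) in auto)
  also have "\<dots> = (\<Sum>y\<in>D. \<Sum>ys\<in>permutations_of_set (D - {y}). f (y # ys))"
    by (rule sum.cong[OF refl]) (simp add: sum.reindex inj_on_def)
  finally show ?thesis .
qed

lemma sum_permutations_of_set_rev:
  "(\<Sum>xs\<in>permutations_of_set D. f (rev xs)) = (\<Sum>xs\<in>permutations_of_set D. f xs)"
proof -
  have "(\<Sum>xs\<in>rev ` permutations_of_set D. f xs) = (\<Sum>xs\<in>permutations_of_set D. f (rev xs))"
    by (rule sum.reindex_cong[OF inj_on_rev refl refl])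
  then show ?thesis by simp
qed

lemma sum_permutations_of_set_snoc:
  assumes "finite D" "D \<noteq> {}"
  shows "(\<Sum>xs\<in>permutations_of_set D. f xs) = (\<Sum>y\<in>D. \<Sum>ys\<in>permutations_of_set (D - {y}). f (ys @ [y]))"
proof -
  have "(\<Sum>xs\<in>permutations_of_set D. f xs) = (\<Sum>xs\<in>permutations_of_set D. f (rev xs))"
    by (rule sum_permutations_of_set_rev[symmetric])
  also have "\<dots> = (\<Sum>y\<in>D. \<Sum>ys\<in>permutations_of_set (D - {y}). f (rev ys @ [y]))"
    by (simp add: sum_permutations_of_set_Cons[OF assms])
  also have "\<dots> = (\<Sum>y\<in>D. \<Sum>ys\<in>permutations_of_set (D - {y}). f (ys @ [y]))"
    by (simp add: sum_permutations_of_set_rev[where f = "\<lambda>ys. f (ys @ _)"])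
  finally show ?thesis .
qed

fun rank_order :: "'a list \<Rightarrow> ('a \<times> 'a) set" where
  "rank_order [] = {}"
| "rank_order (x # xs) = {x} \<times> set xs \<union> rank_order xs"

lemma rank_order_subset: "rank_order xs \<subseteq> set xs \<times> set xs"
  by (induction xs) auto

lemma strict_linear_order_on_rank_order:
  "distinct xs \<Longrightarrow> strict_linear_order_on (set xs) (rank_order xs)"
proof (induction xs)
  case (Cons x xs)
  then show ?case
    using rank_order_subset[of xs]
    unfolding strict_linear_order_on_def trans_def irrefl_def total_on_def by auto
qed (simp add: strict_linear_order_on_def)

lemma rank_order_in_linorders: "xs \<in> permutations_of_set UNIV \<Longrightarrow> rank_order xs \<in> linorders"
  using strict_linear_order_on_rank_order unfolding linorders_def permutations_of_set_def by force

lemma lower_cut_rank_order: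
  "distinct (as @ y # bs) \<Longrightarrow> lower_cut (rank_order (as @ y # bs)) y = UNIV - set as"
  by (induction as) (auto simp: lower_cut_def dest: subsetD[OF rank_order_subset])

lemma permutations_with_lower_cut:
  fixes y :: "'a::finite"
  assumes y: "y \<in> C"
  shows "{xs \<in> permutations_of_set UNIV. lower_cut (rank_order xs) y = C}
       = (\<lambda>(as, bs). as @ y # bs) ` (permutations_of_set (UNIV - C) \<times> permutations_of_set (C - {y}))"
proof (intro set_eqI iffI)
  fix xs assume "xs \<in> {xs \<in> permutations_of_set UNIV. lower_cut (rank_order xs) y = C}"
  then have d: "distinct xs" and s: "set xs = UNIV" and cut: "lower_cut (rank_order xs) y = C"
    by (auto simp: permutations_of_set_def)
  obtain as bs where xs: "xs = as @ y # bs"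
    using split_list[of y xs] s by blast
  have "set as = UNIV - C"
    using cut lower_cut_rank_order[of as y bs] d xs by auto
  moreover have "set bs = C - {y}"
    using calculation d s xs y by auto
  ultimately show "xs \<in> (\<lambda>(as, bs). as @ y # bs) `
      (permutations_of_set (UNIV - C) \<times> permutations_of_set (C - {y}))"
    using d xs by (auto simp: permutations_of_set_def)
next
  fix xs assume "xs \<in> (\<lambda>(as, bs). as @ y # bs) `
    (permutations_of_set (UNIV - C) \<times> permutations_of_set (C - {y}))"
  then obtain as bs where xs: "xs = as @ y # bs" and "set as = UNIV - C" "distinct as"
    and "set bs = C - {y}" "distinct bs"
    by (auto simp: permutations_of_set_def)
  moreover from this have "distinct xs" "set xs = UNIV" using y by auto
  ultimately show "xs \<in> {xs \<in> permutations_of_set UNIV. lower_cut (rank_order xs) y = C}"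
    by (auto simp: permutations_of_set_def lower_cut_rank_order)
qed

lemma inj_on_append_Cons:
  "inj_on (\<lambda>(as, bs). as @ y # bs) {(as, bs). y \<notin> set as \<and> y \<notin> set bs}"
  by (auto intro!: inj_onI simp: append_Cons_eq_iff)

(* Nodes without outflow are reached with probability zero; the uniform step there only
   makes the path probabilities sum to one. *)
definition step_prob :: "('a \<Rightarrow> 'a set \<Rightarrow> real) \<Rightarrow> 'a set \<Rightarrow> 'a \<Rightarrow> real" where
  "step_prob w D y =
     (if y \<notin> D then 0 else if outflow w D = 0 then 1 / card D else w y D / outflow w D)"

fun path_prob :: "('a \<Rightarrow> 'a set \<Rightarrow> real) \<Rightarrow> 'a set \<Rightarrow> 'a list \<Rightarrow> real" where
  "path_prob w D [] = 1"
| "path_prob w D (y # ys) = step_prob w D y * path_prob w (D - {y}) ys"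

lemma sum_step_prob:
  assumes "finite D" "D \<noteq> {}"
  shows "(\<Sum>y\<in>D. step_prob w D y) = 1"
proof (cases "outflow w D = 0")
  case True
  then show ?thesis using assms by (simp add: step_prob_def)
next
  case False
  then have "(\<Sum>y\<in>D. step_prob w D y) = outflow w D / outflow w D"
    unfolding step_prob_def by (simp add: outflow_def flip: sum_divide_distrib)
  then show ?thesis using False by simp
qed

lemma sum_path_prob: "finite D \<Longrightarrow> (\<Sum>xs\<in>permutations_of_set D. path_prob w D xs) = 1"
proof (induction "card D" arbitrary: D)
  case (Suc n)
  then have "D \<noteq> {}" by auto
  then have "(\<Sum>xs\<in>permutations_of_set D. path_prob w D xs)
      = (\<Sum>y\<in>D. step_prob w D y * (\<Sum>ys\<in>permutations_of_set (D - {y}). path_prob w (D - {y}) ys))"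
    by (simp add: sum_permutations_of_set_Cons[OF Suc.prems] sum_distrib_left)
  also have "\<dots> = (\<Sum>y\<in>D. step_prob w D y)"
    using Suc by (intro sum.cong refl) simp
  finally show ?case using sum_step_prob[OF Suc.prems \<open>D \<noteq> {}\<close>] by simp
qed simp

lemma path_prob_append: "path_prob w D (as @ bs) = path_prob w D as * path_prob w (D - set as) bs"
  by (induction as arbitrary: D) (simp_all add: Diff_insert2[symmetric])

lemma sum_path_prob_last_step:
  fixes S :: "'a::finite set"
  assumes "S \<noteq> {}"
  shows "(\<Sum>as\<in>permutations_of_set S. path_prob w UNIV as)
       = (\<Sum>z\<in>S. step_prob w (insert z (UNIV - S)) z
                * (\<Sum>ys\<in>permutations_of_set (S - {z}). path_prob w UNIV ys))"
proof -
  have "path_prob w UNIV (ys @ [z]) = path_prob w UNIV ys * step_prob w (insert z (UNIV - S)) z"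
    if "z \<in> S" "ys \<in> permutations_of_set (S - {z})" for z ys
  proof -
    have "UNIV - set ys = insert z (UNIV - S)"
      using that by (auto simp: permutations_of_set_def)
    then show ?thesis by (simp add: path_prob_append)
  qed
  then show ?thesis
    by (simp add: sum_permutations_of_set_snoc[OF _ assms] sum_distrib_left ac_simps cong: sum.cong)
qed

definition rank_dist :: "('a::finite \<Rightarrow> 'a set \<Rightarrow> real) \<Rightarrow> ('a \<times> 'a) set \<Rightarrow> real" where
  "rank_dist w r = (\<Sum>xs\<in>permutations_of_set UNIV. of_bool (rank_order xs = r) * path_prob w UNIV xs)"

lemma sum_linorders_rank_dist:
  "(\<Sum>r\<in>linorders. g r * rank_dist w r)
     = (\<Sum>xs\<in>permutations_of_set UNIV. g (rank_order xs) * path_prob w UNIV xs)"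
proof -
  have "(\<Sum>r\<in>linorders. g r * rank_dist w r)
      = (\<Sum>xs\<in>permutations_of_set UNIV. \<Sum>r\<in>linorders.
           of_bool (rank_order xs = r) * (g r * path_prob w UNIV xs))"
    unfolding rank_dist_def sum_distrib_left by (subst sum.swap) (simp add: ac_simps)
  also have "\<dots> = (\<Sum>xs\<in>permutations_of_set UNIV. g (rank_order xs) * path_prob w UNIV xs)"
  proof (intro sum.cong refl)
    fix xs assume "xs \<in> permutations_of_set (UNIV :: 'a set)"
    then have "linorders \<inter> {r. rank_order xs = r} = {rank_order xs}"
      using rank_order_in_linorders by blast
    then show "(\<Sum>r\<in>linorders. of_bool (rank_order xs = r) * (g r * path_prob w UNIV xs))
        = g (rank_order xs) * path_prob w UNIV xs"
      by simp
  qed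
  finally show ?thesis .
qed

lemma rank_dist_outside: "r \<notin> linorders \<Longrightarrow> rank_dist w r = 0"
  unfolding rank_dist_def by (auto intro!: sum.neutral dest: rank_order_in_linorders)

lemma sum_rank_dist: "(\<Sum>r\<in>linorders. rank_dist w r) = 1"
  using sum_linorders_rank_dist[of "\<lambda>_. 1" w] by (simp add: sum_path_prob)

locale subset_flow =
  fixes w :: "'a::finite \<Rightarrow> 'a set \<Rightarrow> real"
  assumes nonneg: "y \<in> C \<Longrightarrow> 0 \<le> w y C"
    and conserving: "conserving w"
begin

lemma outflow_nonneg: "0 \<le> outflow w C"
  unfolding outflow_def by (simp add: nonneg sum_nonneg)

lemma step_prob_nonneg: "0 \<le> step_prob w D y"
  unfolding step_prob_def by (simp add: nonneg outflow_nonneg)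

lemma path_prob_nonneg: "0 \<le> path_prob w D xs"
  by (induction xs arbitrary: D) (simp_all add: step_prob_nonneg)

lemma rank_dist_nonneg: "0 \<le> rank_dist w r"
  unfolding rank_dist_def by (simp add: sum_nonneg path_prob_nonneg)

lemma is_dist_rank_dist: "is_dist (rank_dist w)"
  unfolding is_dist_def by (simp add: rank_dist_nonneg rank_dist_outside sum_rank_dist)

lemma step_prob_mult_outflow:
  assumes "y \<in> D" shows "step_prob w D y * outflow w D = w y D"
proof (cases "outflow w D = 0")
  case True
  have "w y D \<le> outflow w D"
    unfolding outflow_def using assms by (intro member_le_sum) (simp_all add: nonneg)
  then show ?thesis using True nonneg[OF assms] by simp
qed (simp add: step_prob_def assms)

(* The chain reaches the node UNIV - S with probability outflow w (UNIV - S) / outflow w UNIV. *)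
lemma outflow_eq_prefix_mass:
  "S \<noteq> UNIV \<Longrightarrow> outflow w UNIV * (\<Sum>as\<in>permutations_of_set S. path_prob w UNIV as) = outflow w (UNIV - S)"
proof (induction "card S" arbitrary: S)
  case (Suc n)
  then have "S \<noteq> {}" by auto
  have "outflow w UNIV * (\<Sum>as\<in>permutations_of_set S. path_prob w UNIV as)
      = (\<Sum>z\<in>S. step_prob w (insert z (UNIV - S)) z
                * (outflow w UNIV * (\<Sum>ys\<in>permutations_of_set (S - {z}). path_prob w UNIV ys)))"
    by (simp add: sum_path_prob_last_step[OF \<open>S \<noteq> {}\<close>] sum_distrib_left ac_simps)
  also have "\<dots> = (\<Sum>z\<in>S. step_prob w (insert z (UNIV - S)) z * outflow w (insert z (UNIV - S)))"
  proof (intro sum.cong refl)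
    fix z assume "z \<in> S"
    then have "card (S - {z}) = n" "S - {z} \<noteq> UNIV" "UNIV - (S - {z}) = insert z (UNIV - S)"
      using Suc.hyps(2) by auto
    then show "step_prob w (insert z (UNIV - S)) z
          * (outflow w UNIV * (\<Sum>ys\<in>permutations_of_set (S - {z}). path_prob w UNIV ys))
        = step_prob w (insert z (UNIV - S)) z * outflow w (insert z (UNIV - S))"
      using Suc.hyps(1)[of "S - {z}"] by simp
  qed
  also have "\<dots> = inflow w (UNIV - S)"
    unfolding inflow_def by (simp add: step_prob_mult_outflow double_diff)
  also have "\<dots> = outflow w (UNIV - S)"
  proof -
    have "UNIV - S \<noteq> {}" "UNIV - S \<noteq> UNIV" using Suc.prems \<open>S \<noteq> {}\<close> by auto
    then show ?thesis using conservingD[OF conserving] by simp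
  qed
  finally show ?case .
qed simp

lemma rank_dist_marginal:
  assumes y: "y \<in> C"
  shows "outflow w UNIV * (\<Sum>r\<in>linorders. cut_flow r y C * rank_dist w r) = w y C"
proof -
  let ?prefixes = "permutations_of_set (UNIV - C)" and ?suffixes = "permutations_of_set (C - {y})"
  have path_split: "path_prob w UNIV (as @ y # bs)
      = path_prob w UNIV as * step_prob w C y * path_prob w (C - {y}) bs"
    if "as \<in> ?prefixes" for as bs
  proof -
    have "UNIV - set as = C" using that by (auto simp: permutations_of_set_def)
    then show ?thesis by (simp add: path_prob_append)
  qed
  have "(\<Sum>r\<in>linorders. cut_flow r y C * rank_dist w r)
      = (\<Sum>xs\<in>{xs \<in> permutations_of_set UNIV. lower_cut (rank_order xs) y = C}. path_prob w UNIV xs)"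
    unfolding cut_flow_def sum_linorders_rank_dist by (simp add: Int_def)
  also have "\<dots> = (\<Sum>(as, bs)\<in>?prefixes \<times> ?suffixes. path_prob w UNIV (as @ y # bs))"
  proof -
    have "?prefixes \<times> ?suffixes \<subseteq> {(as, bs). y \<notin> set as \<and> y \<notin> set bs}"
      using y by (auto simp: permutations_of_set_def)
    then show ?thesis
      unfolding permutations_with_lower_cut[OF y]
      by (subst sum.reindex[OF inj_on_subset[OF inj_on_append_Cons]]) (simp_all add: case_prod_unfold)
  qed
  also have "\<dots> = (\<Sum>as\<in>?prefixes. path_prob w UNIV as * step_prob w C y
                     * (\<Sum>bs\<in>?suffixes. path_prob w (C - {y}) bs))"
    by (simp add: sum.cartesian_product[symmetric] path_split sum_distrib_left cong: sum.cong)
  also have "\<dots> = (\<Sum>as\<in>?prefixes. path_prob w UNIV as) * step_prob w C y"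
    by (simp add: sum_path_prob sum_distrib_right)
  finally have "outflow w UNIV * (\<Sum>r\<in>linorders. cut_flow r y C * rank_dist w r)
      = outflow w (UNIV - (UNIV - C)) * step_prob w C y"
    using outflow_eq_prefix_mass[of "UNIV - C"] y by (auto simp: ac_simps)
  also have "\<dots> = w y C"
    using step_prob_mult_outflow[OF y] by (simp add: double_diff ac_simps)
  finally show ?thesis .
qed

end

section \<open>The conditions of the theorem as flow conditions\<close>

definition fst_flow :: "('a::finite \<Rightarrow> 'a \<Rightarrow> 'a set \<Rightarrow> 'a set \<Rightarrow> real) \<Rightarrow> 'a \<Rightarrow> 'a set \<Rightarrow> real" where
  "fst_flow q x A = (\<Sum>y\<in>UNIV. q x y A UNIV)"

lemma cond_b_iff_conserving: "cond_b q \<longleftrightarrow> (\<forall>A x. x \<in> A \<longrightarrow> conserving (\<lambda>y B. q x y A B))"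
  unfolding cond_b_def conserving_def outflow_def inflow_def nesets_def by blast

lemma eq_d_iff: "eq_d q A \<longleftrightarrow> outflow (fst_flow q) A = inflow (fst_flow q) A"
  unfolding eq_d_def outflow_def inflow_def fst_flow_def ..

lemma cond_d_iff_conserving: "cond_d q \<longleftrightarrow> conserving (fst_flow q)"
  unfolding cond_d_def eq_d_iff conserving_def nesets_def by blast

lemma eq_e_iff_outflow: "eq_e q \<longleftrightarrow> outflow (fst_flow q) UNIV = 1"
  unfolding eq_e_def outflow_def fst_flow_def ..

lemma cond_cD: "cond_c q \<Longrightarrow> x \<in> A \<Longrightarrow> y \<in> B \<Longrightarrow> 0 \<le> q x y A B"
  unfolding cond_c_def nesets_def by blast

lemma subset_flow_fst_flow: "cond_c q \<Longrightarrow> cond_d q \<Longrightarrow> subset_flow (fst_flow q)"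
  unfolding subset_flow_def cond_d_iff_conserving fst_flow_def
  by (auto intro!: sum_nonneg elim: cond_cD)

lemma subset_flow_section:
  "cond_b q \<Longrightarrow> cond_c q \<Longrightarrow> x \<in> A \<Longrightarrow> subset_flow (\<lambda>y B. q x y A B)"
  unfolding subset_flow_def cond_b_iff_conserving by (auto intro: cond_cD)

definition cut_mass ::
    "(('a \<times> 'a) set \<Rightarrow> real) \<Rightarrow> ('a \<Rightarrow> ('a \<times> 'a) set \<Rightarrow> ('a \<times> 'a) set \<Rightarrow> real)
       \<Rightarrow> 'a \<Rightarrow> 'a \<Rightarrow> 'a set \<Rightarrow> 'a set \<Rightarrow> real" where
  "cut_mass \<nu> t x y A B =
     (\<Sum>r\<in>linorders. \<Sum>r'\<in>linorders. \<nu> r * t x r r' * cut_flow r x A * cut_flow r' y B)"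

lemma sum_linorders_of_bool_Nset:
  fixes x :: "'a::finite"
  shows "(\<Sum>r\<in>linorders. of_bool (r \<in> Nset x A) * f r) = (\<Sum>r\<in>Nset x A. f r :: real)"
proof -
  have "linorders \<inter> {r. r \<in> Nset x A} = Nset x A" unfolding Nset_def by blast
  then show ?thesis by (simp add: sum_of_bool_mult_eq)
qed

lemma sum_supersets_cut_mass:
  fixes \<nu> :: "('a::finite \<times> 'a) set \<Rightarrow> real"
  assumes x: "x \<in> A" and y: "y \<in> B"
  shows "(\<Sum>A'\<in>{A'. A \<subseteq> A'}. \<Sum>B'\<in>{B'. B \<subseteq> B'}. cut_mass \<nu> t x y A' B')
       = (\<Sum>r\<in>Nset x A. \<Sum>r'\<in>Nset y B. \<nu> r * t x r r')"
proof -
  have "(\<Sum>A'\<in>{A'. A \<subseteq> A'}. \<Sum>B'\<in>{B'. B \<subseteq> B'}. cut_mass \<nu> t x y A' B')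
      = (\<Sum>r\<in>linorders. \<Sum>r'\<in>linorders. \<nu> r * t x r r'
           * (\<Sum>A'\<in>{A'. A \<subseteq> A'}. cut_flow r x A') * (\<Sum>B'\<in>{B'. B \<subseteq> B'}. cut_flow r' y B'))"
    unfolding cut_mass_def sum_distrib_left sum_distrib_right
    by (subst (1 2) sum.swap, subst (2 3) sum.swap,
        subst sum.swap[where A = "{B'. B \<subseteq> B'}" and B = "{A'. A \<subseteq> A'}"]) (rule refl)
  also have "\<dots> = (\<Sum>r\<in>linorders. \<Sum>r'\<in>linorders.
                     of_bool (r \<in> Nset x A) * (of_bool (r' \<in> Nset y B) * (\<nu> r * t x r r')))"
    by (intro sum.cong refl) (simp add: sum_supersets_cut_flow x y)
  also have "\<dots> = (\<Sum>r\<in>Nset x A. \<Sum>r'\<in>Nset y B. \<nu> r * t x r r')"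
    by (simp only: sum_distrib_left[symmetric] sum_linorders_of_bool_Nset)
  finally show ?thesis .
qed

lemma fst_flow_cut_mass:
  fixes \<nu> :: "('a::finite \<times> 'a) set \<Rightarrow> real"
  assumes t: "\<forall>x. \<forall>r\<in>linorders. is_dist (t x r)"
  shows "fst_flow (cut_mass \<nu> t) = (\<lambda>x A. \<Sum>r\<in>linorders. \<nu> r * cut_flow r x A)"
proof (intro ext)
  fix x A
  have "fst_flow (cut_mass \<nu> t) x A = outflow (\<lambda>y B. cut_mass \<nu> t x y A B) UNIV"
    unfolding fst_flow_def outflow_def ..
  also have "\<dots> = (\<Sum>r\<in>linorders. \<Sum>r'\<in>linorders.
                     \<nu> r * t x r r' * cut_flow r x A * outflow (cut_flow r') UNIV)"
    unfolding cut_mass_def by (simp add: outflow_sum outflow_scale)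
  also have "\<dots> = (\<Sum>r\<in>linorders. \<nu> r * cut_flow r x A * (\<Sum>r'\<in>linorders. t x r r'))"
    by (simp add: outflow_cut_flow_UNIV sum_distrib_left ac_simps)
  also have "\<dots> = (\<Sum>r\<in>linorders. \<nu> r * cut_flow r x A)"
    using t by (simp add: is_dist_def)
  finally show "fst_flow (cut_mass \<nu> t) x A = (\<Sum>r\<in>linorders. \<nu> r * cut_flow r x A)" .
qed

lemma conditions_if_cdru_rep:
  fixes p :: "'a::finite \<Rightarrow> 'a \<Rightarrow> 'a set \<Rightarrow> 'a set \<Rightarrow> real"
  assumes "cdru_rep Xlim p"
  shows "\<exists>q. cond_a Xlim p q \<and> cond_b q \<and> cond_c q \<and> cond_d q \<and> eq_e q"
proof -
  obtain \<nu> t where \<nu>: "is_dist \<nu>" and t: "\<forall>x. \<forall>r\<in>linorders. is_dist (t x r)"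
    and rep: "\<forall>(A, B)\<in>Xlim. \<forall>x\<in>A. \<forall>y\<in>B. p x y A B = (\<Sum>r\<in>Nset x A. \<Sum>r'\<in>Nset y B. \<nu> r * t x r r')"
    using assms unfolding cdru_rep_def by blast
  have "cond_a Xlim p (cut_mass \<nu> t)"
    unfolding cond_a_def using rep by (auto simp: sum_supersets_cut_mass)
  moreover have "cond_b (cut_mass \<nu> t)"
    unfolding cond_b_iff_conserving cut_mass_def
    by (auto intro!: conserving_sum conserving_scale conserving_cut_flow)
  moreover have "cond_c (cut_mass \<nu> t)"
    unfolding cond_c_def cut_mass_def using \<nu> t
    by (auto simp: is_dist_def cut_flow_def intro!: sum_nonneg mult_nonneg_nonneg)
  moreover have "cond_d (cut_mass \<nu> t)"
    unfolding cond_d_iff_conserving fst_flow_cut_mass[OF t]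
    by (auto intro!: conserving_sum conserving_scale conserving_cut_flow)
  moreover have "eq_e (cut_mass \<nu> t)"
    using \<nu> unfolding eq_e_iff_outflow fst_flow_cut_mass[OF t] is_dist_def
    by (simp add: outflow_sum outflow_scale outflow_cut_flow_UNIV)
  ultimately show ?thesis by blast
qed

definition pref_dist :: "('a::finite \<Rightarrow> 'a \<Rightarrow> 'a set \<Rightarrow> 'a set \<Rightarrow> real) \<Rightarrow> ('a \<times> 'a) set \<Rightarrow> real" where
  "pref_dist q = rank_dist (fst_flow q)"

definition trans_dist ::
    "('a::finite \<Rightarrow> 'a \<Rightarrow> 'a set \<Rightarrow> 'a set \<Rightarrow> real) \<Rightarrow> 'a \<Rightarrow> ('a \<times> 'a) set \<Rightarrow> ('a \<times> 'a) set \<Rightarrow> real" where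
  "trans_dist q x r = rank_dist (\<lambda>y B. q x y (lower_cut r x) B)"

lemma cut_mass_pref_trans_dist:
  fixes q :: "'a::finite \<Rightarrow> 'a \<Rightarrow> 'a set \<Rightarrow> 'a set \<Rightarrow> real"
  assumes b: "cond_b q" and c: "cond_c q" and d: "cond_d q" and e: "eq_e q"
    and x: "x \<in> A" and y: "y \<in> B"
  shows "cut_mass (pref_dist q) (trans_dist q) x y A B = q x y A B"
proof -
  let ?second = "\<Sum>r'\<in>linorders. cut_flow r' y B * rank_dist (\<lambda>y B. q x y A B) r'"
  have "(\<Sum>r\<in>linorders. cut_flow r x A * pref_dist q r) = fst_flow q x A"
    using subset_flow.rank_dist_marginal[OF subset_flow_fst_flow[OF c d] x] e
    unfolding pref_dist_def eq_e_iff_outflow by simp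
  moreover have "fst_flow q x A * ?second = q x y A B"
    using subset_flow.rank_dist_marginal[OF subset_flow_section[OF b c x] y]
    unfolding fst_flow_def outflow_def by simp
  moreover have "cut_mass (pref_dist q) (trans_dist q) x y A B
      = (\<Sum>r\<in>linorders. cut_flow r x A * pref_dist q r * ?second)"
    unfolding cut_mass_def
  proof (rule sum.cong[OF refl])
    fix r
    show "(\<Sum>r'\<in>linorders. pref_dist q r * trans_dist q x r r' * cut_flow r x A * cut_flow r' y B)
        = cut_flow r x A * pref_dist q r * ?second"
    proof (cases "lower_cut r x = A")
      case True
      then have "cut_flow r x A = 1" "trans_dist q x r = rank_dist (\<lambda>y B. q x y A B)"
        by (simp_all add: cut_flow_def trans_dist_def)
      then show ?thesis by (simp add: sum_distrib_left ac_simps)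
    qed (simp add: cut_flow_def)
  qed
  ultimately show ?thesis by (simp flip: sum_distrib_right)
qed

lemma cdru_rep_if_conditions:
  fixes q :: "'a::finite \<Rightarrow> 'a \<Rightarrow> 'a set \<Rightarrow> 'a set \<Rightarrow> real"
  assumes a: "cond_a Xlim p q" and b: "cond_b q" and c: "cond_c q" and d: "cond_d q" and e: "eq_e q"
  shows "cdru_rep Xlim p"
proof -
  have "is_dist (pref_dist q)"
    unfolding pref_dist_def by (rule subset_flow.is_dist_rank_dist[OF subset_flow_fst_flow[OF c d]])
  moreover have "is_dist (trans_dist q x r)" if "r \<in> linorders" for x r
  proof -
    have "x \<in> lower_cut r x" using linorders_irrefl[OF that] by (simp add: lower_cut_def)
    then show ?thesis
      unfolding trans_dist_def by (rule subset_flow.is_dist_rank_dist[OF subset_flow_section[OF b c]])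
  qed
  moreover have "p x y A B = (\<Sum>r\<in>Nset x A. \<Sum>r'\<in>Nset y B. pref_dist q r * trans_dist q x r r')"
    if AB: "(A, B) \<in> Xlim" and x: "x \<in> A" and y: "y \<in> B" for A B x y
  proof -
    have "p x y A B = (\<Sum>A'\<in>{A'. A \<subseteq> A'}. \<Sum>B'\<in>{B'. B \<subseteq> B'}. q x y A' B')"
      using a AB x y unfolding cond_a_def by auto
    also have "\<dots> = (\<Sum>A'\<in>{A'. A \<subseteq> A'}. \<Sum>B'\<in>{B'. B \<subseteq> B'}.
                       cut_mass (pref_dist q) (trans_dist q) x y A' B')"
      by (intro sum.cong refl) (metis cut_mass_pref_trans_dist[OF b c d e] mem_Collect_eq subsetD x y)
    also have "\<dots> = (\<Sum>r\<in>Nset x A. \<Sum>r'\<in>Nset y B. pref_dist q r * trans_dist q x r r')"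
      by (rule sum_supersets_cut_mass[OF x y])
    finally show ?thesis .
  qed
  ultimately show ?thesis
    unfolding cdru_rep_def by blast
qed

lemma net_outflow_superset_sum:
  fixes q :: "'a::finite \<Rightarrow> 'a \<Rightarrow> 'a set \<Rightarrow> 'a set \<Rightarrow> real"
  assumes rj: "rjcr Xlim p" and a: "cond_a Xlim p q" and b: "cond_b q"
    and AB: "(A, B) \<in> Xlim" and "B \<noteq> {}"
  shows "(\<Sum>C\<in>{C. A \<subseteq> C}. outflow (fst_flow q) C - inflow (fst_flow q) C) = 1"
proof -
  have "1 = (\<Sum>x\<in>A. \<Sum>y\<in>B. p x y A B)"
    using rj AB unfolding rjcr_def by auto
  also have "\<dots> = (\<Sum>x\<in>A. \<Sum>y\<in>B. \<Sum>A'\<in>{A'. A \<subseteq> A'}. \<Sum>B'\<in>{B'. B \<subseteq> B'}. q x y A' B')"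
    by (intro sum.cong refl) (use a AB in \<open>auto simp: cond_a_def\<close>)
  also have "\<dots> = (\<Sum>x\<in>A. \<Sum>A'\<in>{A'. A \<subseteq> A'}. \<Sum>y\<in>B. \<Sum>B'\<in>{B'. B \<subseteq> B'}. q x y A' B')"
    by (rule sum.cong[OF refl]) (rule sum.swap)
  also have "\<dots> = (\<Sum>x\<in>A. \<Sum>A'\<in>{A'. A \<subseteq> A'}. fst_flow q x A')"
  proof (intro sum.cong refl)
    fix x A' assume "x \<in> A" "A' \<in> {A'. A \<subseteq> A'}"
    then have "conserving (\<lambda>y B. q x y A' B)" using b cond_b_iff_conserving by blast
    then show "(\<Sum>y\<in>B. \<Sum>B'\<in>{B'. B \<subseteq> B'}. q x y A' B') = fst_flow q x A'"
      using sum_supersets_conserving \<open>B \<noteq> {}\<close> unfolding fst_flow_def outflow_def by blast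
  qed
  also have "\<dots> = (\<Sum>C\<in>{C. A \<subseteq> C}. outflow (fst_flow q) C - inflow (fst_flow q) C)"
    by (rule sum_supersets_eq_net_outflow)
  finally show ?thesis by simp
qed

lemma conditions_if_partial_conditions:
  fixes q :: "'a::finite \<Rightarrow> 'a \<Rightarrow> 'a set \<Rightarrow> 'a set \<Rightarrow> real"
  assumes rj: "rjcr Xlim p" and a: "cond_a Xlim p q" and b: "cond_b q"
    and d': "cond_d' Xlim q" and e': "cond_e' Xlim q"
  shows "cond_d q \<and> eq_e q"
proof -
  let ?D = "\<lambda>C. outflow (fst_flow q) C - inflow (fst_flow q) C"
  have D: "?D A = of_bool (A = UNIV)" if "A \<noteq> {}" for A
  proof (rule top_indicator_if_superset_sums[where \<A> = "{A. \<exists>B\<in>nesets. (A, B) \<in> Xlim}"])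
    show "(\<Sum>C\<in>{C. A \<subseteq> C}. ?D C) = 1" if "A \<in> {A. \<exists>B\<in>nesets. (A, B) \<in> Xlim}" for A
      using that net_outflow_superset_sum[OF rj a b] by (auto simp: nesets_def)
    show "?D A' = 0" if "A' \<noteq> {}" "A' \<noteq> UNIV" "A' \<notin> {A. \<exists>B\<in>nesets. (A, B) \<in> Xlim}" for A'
      using d' that unfolding cond_d'_def eq_d_iff nesets_def by auto
    show "?D UNIV = 1" if "UNIV \<notin> {A. \<exists>B\<in>nesets. (A, B) \<in> Xlim}"
      using e' that unfolding cond_e'_def eq_e_iff_outflow by (simp add: inflow_def)
  qed (rule that)
  have "eq_d q A" if "A \<noteq> {}" "A \<noteq> UNIV" for A
    using D[OF that(1)] that(2) by (simp add: eq_d_iff)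
  then have "cond_d q"
    unfolding cond_d_def nesets_def by blast
  moreover have "eq_e q"
    unfolding eq_e_iff_outflow using D[of UNIV] by (simp add: inflow_def)
  ultimately show ?thesis ..
qed

theorem theorem8:
  fixes Xlim :: "('a::finite set \<times> 'a set) set"
    and p :: "'a \<Rightarrow> 'a \<Rightarrow> 'a set \<Rightarrow> 'a set \<Rightarrow> real"
  assumes "Xlim \<subseteq> nesets \<times> nesets"
    and "rjcr Xlim p"
  shows "(cdru_rep Xlim p \<longleftrightarrow>
            (\<exists>q. cond_a Xlim p q \<and> cond_b q \<and> cond_c q \<and> cond_d q \<and> eq_e q))
       \<and> ((\<exists>q. cond_a Xlim p q \<and> cond_b q \<and> cond_c q \<and> cond_d q \<and> eq_e q) \<longleftrightarrow>
            (\<exists>q. cond_a Xlim p q \<and> cond_b q \<and> cond_c q \<and> cond_d' Xlim q \<and> cond_e' Xlim q))"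
proof (intro conjI iffI)
  assume "cdru_rep Xlim p"
  then show "\<exists>q. cond_a Xlim p q \<and> cond_b q \<and> cond_c q \<and> cond_d q \<and> eq_e q"
    by (rule conditions_if_cdru_rep)
next
  assume "\<exists>q. cond_a Xlim p q \<and> cond_b q \<and> cond_c q \<and> cond_d q \<and> eq_e q"
  then show "cdru_rep Xlim p"
    using cdru_rep_if_conditions by blast
next
  assume "\<exists>q. cond_a Xlim p q \<and> cond_b q \<and> cond_c q \<and> cond_d q \<and> eq_e q"
  then show "\<exists>q. cond_a Xlim p q \<and> cond_b q \<and> cond_c q \<and> cond_d' Xlim q \<and> cond_e' Xlim q"
    unfolding cond_d_def cond_d'_def cond_e'_def by blast
next
  assume "\<exists>q. cond_a Xlim p q \<and> cond_b q \<and> cond_c q \<and> cond_d' Xlim q \<and> cond_e' Xlim q"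
  then show "\<exists>q. cond_a Xlim p q \<and> cond_b q \<and> cond_c q \<and> cond_d q \<and> eq_e q"
    using conditions_if_partial_conditions[OF \<open>rjcr Xlim p\<close>] by blast
qed

end
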